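(* When $n$ agents have additive valuations over chores and equal entitlements, the AlgChores allocation algorithm gives every agent $i$ a bundle of cost at most $\frac{4n-1}{3n}APS_i$.
   Context: A set $\mathcal{M}$ of $m$ indivisible chores is allocated to $n$ agents, each agent $i$ having an additive disvaluation (cost) function $c_i$ and entitlement (responsibility) $b_i=\frac{1}{n}$. The anyprice share for chores is $APS(c_i,b_i)=\max_{P}\min_{\{S\subseteq\mathcal{M}\,:\,\sum_{j\in S}p_j\ge b_i\}} c_i(S)$, where $P=(p_1,\ldots,p_m)$ ranges over nonnegative price vectors with $\sum_j p_j=1$. An instance is identically ordered (IDO) if chores can be indexed $e_1,\ldots,e_m$ so that $c_i(e_j)\ge c_i(e_k)$ for every agent $i$ and every $j<k$. AlgChores (of Barman and Krishnamurthy 2020), on an IDO instance: start with all bundles empty; for $r=1,\ldots,m$, choose an agent $i$ who envies no other agent, add chore $e_r$ to her bundle, and then resolve envy cycles (by rotating bundles along cycles in the envy graph); output the resulting allocation. On general instances, AlgChores is run via the standard reduction to IDO instances, which preserves the approximation guarantee. *)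

theory Defs
  imports Main "HOL.Real"
begin

text \<open>Agents are 0..n-1, chores are 0..m-1 (chore j corresponds to e_(j+1)).
  A cost profile is c :: nat => nat => real, c i j = cost of chore j for agent i.\<close>

definition cost :: "(nat \<Rightarrow> nat \<Rightarrow> real) \<Rightarrow> nat \<Rightarrow> nat set \<Rightarrow> real" where
  "cost c i S = (\<Sum>j\<in>S. c i j)"

definition aps_chores :: "nat \<Rightarrow> (nat \<Rightarrow> real) \<Rightarrow> real \<Rightarrow> real" where
  "aps_chores m ci b =
     Sup ((\<lambda>p. Min ((\<lambda>S. \<Sum>j\<in>S. ci j) ` {S. S \<subseteq> {..<m} \<and> (\<Sum>j\<in>S. p j) \<ge> b}))
          ` {p :: nat \<Rightarrow> real. (\<forall>j<m. 0 \<le> p j) \<and> (\<Sum>j<m. p j) = 1})"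

definition is_ido :: "(nat \<Rightarrow> nat \<Rightarrow> real) \<Rightarrow> nat \<Rightarrow> nat \<Rightarrow> bool" where
  "is_ido c n m \<longleftrightarrow> (\<forall>i<n. \<forall>j k. j < k \<and> k < m \<longrightarrow> c i k \<le> c i j)"

definition envies :: "(nat \<Rightarrow> nat \<Rightarrow> real) \<Rightarrow> (nat \<Rightarrow> nat set) \<Rightarrow> nat \<Rightarrow> nat \<Rightarrow> bool" where
  "envies c A i k \<longleftrightarrow> cost c i (A k) < cost c i (A i)"

definition is_envy_cycle :: "(nat \<Rightarrow> nat \<Rightarrow> real) \<Rightarrow> nat \<Rightarrow> (nat \<Rightarrow> nat set) \<Rightarrow> nat list \<Rightarrow> bool" where
  "is_envy_cycle c n A cyc \<longleftrightarrow> 2 \<le> length cyc \<and> distinct cyc \<and> set cyc \<subseteq> {..<n} \<and>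
     (\<forall>j<length cyc. envies c A (cyc ! j) (cyc ! ((j + 1) mod length cyc)))"

definition rotate_cycle :: "(nat \<Rightarrow> nat \<Rightarrow> real) \<Rightarrow> nat \<Rightarrow> (nat \<Rightarrow> nat set) \<Rightarrow> (nat \<Rightarrow> nat set) \<Rightarrow> bool" where
  "rotate_cycle c n A A' \<longleftrightarrow> (\<exists>cyc. is_envy_cycle c n A cyc \<and>
     (\<forall>j<length cyc. A' (cyc ! j) = A (cyc ! ((j + 1) mod length cyc))) \<and>
     (\<forall>a. a \<notin> set cyc \<longrightarrow> A' a = A a))"

definition resolve_cycles :: "(nat \<Rightarrow> nat \<Rightarrow> real) \<Rightarrow> nat \<Rightarrow> (nat \<Rightarrow> nat set) \<Rightarrow> (nat \<Rightarrow> nat set) \<Rightarrow> bool" where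
  "resolve_cycles c n A A' \<longleftrightarrow> (rotate_cycle c n)\<^sup>*\<^sup>* A A' \<and> \<not> (\<exists>cyc. is_envy_cycle c n A' cyc)"

text \<open>Executions of AlgChores on an IDO instance: alg_chores_ido c n r A means that after
  allocating chores 0..r-1 (= e_1..e_r) some execution can be in state A.
  The output allocations are those A with alg_chores_ido c n m A.\<close>
inductive alg_chores_ido :: "(nat \<Rightarrow> nat \<Rightarrow> real) \<Rightarrow> nat \<Rightarrow> nat \<Rightarrow> (nat \<Rightarrow> nat set) \<Rightarrow> bool"
  for c n where
  init: "alg_chores_ido c n 0 (\<lambda>_. {})"
| step: "\<lbrakk> alg_chores_ido c n r A; i < n; \<forall>k<n. \<not> envies c A i k;
          resolve_cycles c n (A(i := insert r (A i))) A' \<rbrakk>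
        \<Longrightarrow> alg_chores_ido c n (Suc r) A'"

text \<open>Standard reduction to IDO instances. The IDO instance: agent i's cost for chore j is
  her (j+1)-th largest cost.\<close>
definition ido_of :: "(nat \<Rightarrow> nat \<Rightarrow> real) \<Rightarrow> nat \<Rightarrow> nat \<Rightarrow> nat \<Rightarrow> real" where
  "ido_of c m i j = rev (sort (map (c i) [0..<m])) ! j"

text \<open>Converting an allocation A of the IDO instance back: for j = m-1 down to 0, the agent
  holding chore j in A picks a least costly (for her) remaining chore.
  reduction_pick c n m A k R B: after k picks, R is the set of remaining chores, B the allocation.\<close>
inductive reduction_pick :: "(nat \<Rightarrow> nat \<Rightarrow> real) \<Rightarrow> nat \<Rightarrow> nat \<Rightarrow> (nat \<Rightarrow> nat set)
    \<Rightarrow> nat \<Rightarrow> nat set \<Rightarrow> (nat \<Rightarrow> nat set) \<Rightarrow> bool"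
  for c n m A where
  init: "reduction_pick c n m A 0 {..<m} (\<lambda>_. {})"
| step: "\<lbrakk> reduction_pick c n m A k R B; k < m; i < n; m - 1 - k \<in> A i;
          e \<in> R; \<forall>e'\<in>R. c i e \<le> c i e' \<rbrakk>
        \<Longrightarrow> reduction_pick c n m A (Suc k) (R - {e}) (B(i := insert e (B i)))"

end

theory Submission
  imports Defs "HOL-Library.Disjoint_Sets" "HOL-Combinatorics.Cycles" "HOL-Combinatorics.List_Permutation"
begin

text \<open>Write T i for the share APS_i(1/n). AlgChores maintains the invariant that every agent i
  either pays at most T i or envies no bundle by more than T i / 3. Rotating an envy cycle
  permutes the bundles without raising anybody's cost, so it keeps the invariant. When the
  envy-free agent i receives the next chore e_r, she envies by at most c_i(e_r) afterwards, which is
  fine if c_i(e_r) \<le> T i / 3. Otherwise, pricing each bundle at 2/(2n+1) (spread evenly over its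
  chores) and e_r at 1/(2n+1), some bundle S of price at least 1/n costs at most T i; since the
  instance is identically ordered, S cannot contain three chores among e_1..e_r, so it contains a
  chore forming a bundle of its own, which i does not envy, together with a chore at least as
  costly as e_r, and her new cost is at most T i. In the end, an agent of the second kind pays V with
  n V - (n - 1) T i / 3 \<le> c_i(M) \<le> n T i, i.e. V \<le> (4n - 1)/(3n) T i.
  For general instances, the picking sequence charges every agent at most her cost in the IDO
  instance, whose shares are no larger.\<close>

section \<open>The anyprice share\<close>

definition is_price_vector :: "nat \<Rightarrow> (nat \<Rightarrow> real) \<Rightarrow> bool" where
  "is_price_vector m p \<longleftrightarrow> (\<forall>j<m. 0 \<le> p j) \<and> (\<Sum>j<m. p j) = 1"

lemma aps_chores_eq_Sup:
  "aps_chores m ci b =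
     Sup ((\<lambda>p. Min ((\<lambda>S. \<Sum>j\<in>S. ci j) ` {S. S \<subseteq> {..<m} \<and> b \<le> (\<Sum>j\<in>S. p j)}))
          ` Collect (is_price_vector m))"
  unfolding aps_chores_def is_price_vector_def by simp

lemma finite_affordable_bundles:
  fixes p :: "nat \<Rightarrow> real"
  shows "finite {S. S \<subseteq> {..<m} \<and> b \<le> (\<Sum>j\<in>S. p j)}"
  by (rule finite_subset[of _ "Pow {..<m}"]) auto

lemma bundle_cost_le_aps_chores:
  assumes p: "is_price_vector m p" and "b \<le> 1"
  obtains S where "S \<subseteq> {..<m}" "b \<le> (\<Sum>j\<in>S. p j)" "(\<Sum>j\<in>S. ci j) \<le> aps_chores m ci b"
proof -
  let ?affordable = "\<lambda>p. {S. S \<subseteq> {..<m} \<and> b \<le> (\<Sum>j\<in>S. p j)}"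
  let ?F = "\<lambda>p. Min ((\<lambda>S. \<Sum>j\<in>S. ci j) ` ?affordable p)"
  have everything_affordable: "{..<m} \<in> ?affordable q" if "is_price_vector m q" for q
    using that \<open>b \<le> 1\<close> by (simp add: is_price_vector_def)
  have "bdd_above (?F ` Collect (is_price_vector m))"
  proof (rule bdd_aboveI2)
    fix q assume "q \<in> Collect (is_price_vector m)"
    then show "?F q \<le> (\<Sum>j<m. ci j)"
      using everything_affordable finite_affordable_bundles by (intro Min_le) auto
  qed
  then have "?F p \<le> aps_chores m ci b"
    unfolding aps_chores_eq_Sup using p by (intro cSup_upper) auto
  moreover have "?F p \<in> (\<lambda>S. \<Sum>j\<in>S. ci j) ` ?affordable p"
    using everything_affordable[OF p] finite_affordable_bundles by (intro Min_in) auto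
  ultimately show ?thesis using that by auto
qed

lemma aps_chores_le:
  assumes "0 < m"
    and affordable: "\<And>p. is_price_vector m p \<Longrightarrow>
           \<exists>S\<subseteq>{..<m}. b \<le> (\<Sum>j\<in>S. p j) \<and> (\<Sum>j\<in>S. ci j) \<le> X"
  shows "aps_chores m ci b \<le> X"
  unfolding aps_chores_eq_Sup
proof (rule cSup_least)
  have "is_price_vector m (\<lambda>j. of_bool (j = 0))"
    using \<open>0 < m\<close> by (simp add: is_price_vector_def)
  then show "(\<lambda>p. Min ((\<lambda>S. \<Sum>j\<in>S. ci j) ` {S. S \<subseteq> {..<m} \<and> b \<le> (\<Sum>j\<in>S. p j)}))
      ` Collect (is_price_vector m) \<noteq> {}" by blast
next
  fix x assume "x \<in> (\<lambda>p. Min ((\<lambda>S. \<Sum>j\<in>S. ci j) ` {S. S \<subseteq> {..<m} \<and> b \<le> (\<Sum>j\<in>S. p j)}))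
      ` Collect (is_price_vector m)"
  then obtain p where p: "is_price_vector m p"
    and x: "x = Min ((\<lambda>S. \<Sum>j\<in>S. ci j) ` {S. S \<subseteq> {..<m} \<and> b \<le> (\<Sum>j\<in>S. p j)})" by blast
  obtain S where "S \<subseteq> {..<m}" "b \<le> (\<Sum>j\<in>S. p j)" "(\<Sum>j\<in>S. ci j) \<le> X"
    using affordable[OF p] by blast
  moreover from this have "x \<le> (\<Sum>j\<in>S. ci j)"
    unfolding x using finite_affordable_bundles by (intro Min_le) auto
  ultimately show "x \<le> X" by linarith
qed

lemma chore_cost_le_aps_chores:
  assumes "j < m" "0 < b" "b \<le> 1" and nonneg: "\<forall>j<m. 0 \<le> ci j"
  shows "ci j \<le> aps_chores m ci b"
proof -
  have "is_price_vector m (\<lambda>j'. of_bool (j' = j))"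
    using \<open>j < m\<close> by (simp add: is_price_vector_def)
  then obtain S where S: "S \<subseteq> {..<m}" "b \<le> (\<Sum>j'\<in>S. of_bool (j' = j))"
      "(\<Sum>j\<in>S. ci j) \<le> aps_chores m ci b"
    using bundle_cost_le_aps_chores \<open>b \<le> 1\<close> by blast
  have "finite S" using S(1) finite_subset by blast
  have "j \<in> S"
  proof (rule ccontr)
    assume "j \<notin> S"
    then have "(\<Sum>j'\<in>S. of_bool (j' = j) :: real) = 0" by (intro sum.neutral) auto
    with S(2) \<open>0 < b\<close> show False by simp
  qed
  then have "ci j \<le> (\<Sum>j\<in>S. ci j)"
    using \<open>finite S\<close> S(1) nonneg by (intro member_le_sum) auto
  with S(3) show ?thesis by linarith
qed

lemma aps_chores_nonneg:
  assumes "0 < m" "0 < b" "b \<le> 1" "\<forall>j<m. 0 \<le> ci j"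
  shows "0 \<le> aps_chores m ci b"
  using chore_cost_le_aps_chores[of 0 m b ci] assms by force

text \<open>Proportionality: pricing every chore by its cost, an affordable bundle costs at least a
  b-fraction of everything.\<close>
lemma total_cost_le_aps_chores:
  assumes "0 < m" "0 < b" "b \<le> 1" and nonneg: "\<forall>j<m. 0 \<le> ci j"
  shows "b * (\<Sum>j<m. ci j) \<le> aps_chores m ci b"
proof (cases "(\<Sum>j<m. ci j) = 0")
  case True
  then show ?thesis using aps_chores_nonneg assms by simp
next
  case False
  let ?C = "\<Sum>j<m. ci j"
  have "0 \<le> ?C" using nonneg by (intro sum_nonneg) simp
  with False have "0 < ?C" by simp
  then have "is_price_vector m (\<lambda>j. ci j / ?C)"
    using nonneg by (simp add: is_price_vector_def sum_divide_distrib[symmetric])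
  then obtain S where S: "b \<le> (\<Sum>j\<in>S. ci j / ?C)" "(\<Sum>j\<in>S. ci j) \<le> aps_chores m ci b"
    using bundle_cost_le_aps_chores \<open>b \<le> 1\<close> by metis
  have "b * ?C \<le> (\<Sum>j\<in>S. ci j)"
    using S(1) \<open>0 < ?C\<close> by (simp add: sum_divide_distrib[symmetric] pos_le_divide_eq)
  with S(2) show ?thesis by linarith
qed

section \<open>Allocations and envy-cycle elimination\<close>

definition is_allocation :: "nat \<Rightarrow> nat \<Rightarrow> (nat \<Rightarrow> nat set) \<Rightarrow> bool" where
  "is_allocation n r A \<longleftrightarrow> disjoint_family_on A {..<n} \<and> (\<Union>k<n. A k) = {..<r}"

lemma is_allocation_bundle_subset:
  assumes "is_allocation n r A" "k < n"
  shows "A k \<subseteq> {..<r}"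
proof -
  have "A k \<subseteq> (\<Union>k<n. A k)" using \<open>k < n\<close> by auto
  with assms(1) show ?thesis by (simp add: is_allocation_def)
qed

lemma is_allocation_finite_bundle:
  "is_allocation n r A \<Longrightarrow> k < n \<Longrightarrow> finite (A k)"
  by (meson finite_lessThan finite_subset is_allocation_bundle_subset)

lemma sum_cost_bundles:
  assumes "is_allocation n r A"
  shows "(\<Sum>k<n. cost c i (A k)) = (\<Sum>j<r. c i j)"
proof -
  have "(\<Sum>j<r. c i j) = (\<Sum>j\<in>(\<Union>k<n. A k). c i j)"
    using assms by (simp add: is_allocation_def)
  also have "\<dots> = (\<Sum>k<n. \<Sum>j\<in>A k. c i j)"
    using assms is_allocation_finite_bundle
    by (intro sum.UNION_disjoint) (auto simp: is_allocation_def disjoint_family_on_def)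
  finally show ?thesis by (simp add: cost_def)
qed

lemma is_allocation_insert:
  assumes "is_allocation n r A" "i < n"
  shows "is_allocation n (Suc r) (A(i := insert r (A i)))"
proof -
  have "r \<notin> A k" if "k < n" for k
    using is_allocation_bundle_subset[OF assms(1) that] by auto
  then have "disjoint_family_on (A(i := insert r (A i))) {..<n}"
    using assms(1) by (auto simp: is_allocation_def disjoint_family_on_def)
  moreover have "(\<Union>k<n. (A(i := insert r (A i))) k) = insert r (\<Union>k<n. A k)"
    using assms(2) by auto
  ultimately show ?thesis
    using assms(1) by (auto simp: is_allocation_def)
qed

lemma is_allocation_comp_permutes:
  assumes "is_allocation n r A" "\<sigma> permutes {..<n}"
  shows "is_allocation n r (A \<circ> \<sigma>)"
proof -
  have "disjoint_family_on A {..<n}" using assms(1) by (simp add: is_allocation_def)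
  then have "disjoint_family_on (A \<circ> \<sigma>) {..<n}"
    unfolding disjoint_family_on_def
    using permutes_in_image[OF assms(2)] permutes_inj[OF assms(2)]
    by (metis comp_apply injD)
  moreover have "(\<Union>k<n. (A \<circ> \<sigma>) k) = (\<Union>k<n. A k)"
    using permutes_image[OF assms(2)] by (metis image_comp)
  ultimately show ?thesis
    using assms(1) by (simp add: is_allocation_def)
qed

lemma cost_insert:
  "finite S \<Longrightarrow> e \<notin> S \<Longrightarrow> cost c a (insert e S) = cost c a S + c a e"
  by (simp add: cost_def)

lemma cost_insert_le:
  assumes "0 \<le> c a e"
  shows "cost c a (insert e S) \<le> cost c a S + c a e"
  using assms by (cases "finite S") (simp_all add: cost_def sum.insert_if)

lemma cycle_of_list_nth:
  assumes "distinct cs" "j < length cs"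
  shows "cycle_of_list cs (cs ! j) = cs ! ((j + 1) mod length cs)"
proof -
  have "map (cycle_of_list cs) cs = rotate 1 cs"
    using cyclic_rotation[OF \<open>distinct cs\<close>, of 1] by simp
  then have "cycle_of_list cs (cs ! j) = rotate 1 cs ! j" using assms(2) by (metis nth_map)
  also have "\<dots> = cs ! ((j + 1) mod length cs)" using assms(2) by (simp add: nth_rotate1)
  finally show ?thesis .
qed

lemma rotate_cycle_permutes:
  assumes "rotate_cycle c n A A'"
  obtains \<sigma> where "\<sigma> permutes {..<n}" "A' = A \<circ> \<sigma>" "\<And>a. cost c a (A' a) \<le> cost c a (A a)"
proof -
  obtain cyc where cyc: "is_envy_cycle c n A cyc"
    and rotated: "\<forall>j<length cyc. A' (cyc ! j) = A (cyc ! ((j + 1) mod length cyc))"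
    and fixed: "\<forall>a. a \<notin> set cyc \<longrightarrow> A' a = A a"
    using assms unfolding rotate_cycle_def by blast
  define \<sigma> where "\<sigma> = cycle_of_list cyc"
  have "distinct cyc" "set cyc \<subseteq> {..<n}"
    using cyc by (auto simp: is_envy_cycle_def)
  have \<sigma>_nth: "\<sigma> (cyc ! j) = cyc ! ((j + 1) mod length cyc)" if "j < length cyc" for j
    unfolding \<sigma>_def using cycle_of_list_nth[OF \<open>distinct cyc\<close> that] .
  have "\<sigma> permutes {..<n}"
    unfolding \<sigma>_def using cycle_permutes permutes_subset \<open>set cyc \<subseteq> {..<n}\<close> by blast
  moreover have A': "A' = A \<circ> \<sigma>"
  proof
    fix a
    show "A' a = (A \<circ> \<sigma>) a"
    proof (cases "a \<in> set cyc")
      case True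
      then obtain j where "j < length cyc" "a = cyc ! j" by (auto simp: in_set_conv_nth)
      then show ?thesis using rotated \<sigma>_nth by simp
    next
      case False
      then show ?thesis using fixed id_outside_supp[OF False] unfolding \<sigma>_def by simp
    qed
  qed
  moreover have "cost c a (A' a) \<le> cost c a (A a)" for a
  proof (cases "a \<in> set cyc")
    case True
    then obtain j where "j < length cyc" "a = cyc ! j" by (auto simp: in_set_conv_nth)
    then have "envies c A a (\<sigma> a)"
      using cyc \<sigma>_nth by (auto simp: is_envy_cycle_def)
    then show ?thesis using A' by (simp add: envies_def)
  next
    case False
    then show ?thesis using fixed by simp
  qed
  ultimately show ?thesis using that by blast
qed

definition cost_le_share_or_envy_le_third ::
    "(nat \<Rightarrow> nat \<Rightarrow> real) \<Rightarrow> nat \<Rightarrow> (nat \<Rightarrow> real) \<Rightarrow> (nat \<Rightarrow> nat set) \<Rightarrow> nat \<Rightarrow> bool" where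
  "cost_le_share_or_envy_le_third c n T A i \<longleftrightarrow>
     cost c i (A i) \<le> T i \<or> (\<forall>k<n. cost c i (A i) \<le> cost c i (A k) + T i / 3)"

lemma cost_le_share_or_envy_le_third_comp_permutes:
  assumes "cost_le_share_or_envy_le_third c n T A i" "\<sigma> permutes {..<n}"
    and cost_le: "cost c i (A (\<sigma> i)) \<le> cost c i (A i)"
  shows "cost_le_share_or_envy_le_third c n T (A \<circ> \<sigma>) i"
proof -
  have "\<sigma> k < n" if "k < n" for k
    using permutes_in_image[OF assms(2)] that by simp
  then show ?thesis
    using assms(1) cost_le unfolding cost_le_share_or_envy_le_third_def comp_apply
    by (meson order_trans)
qed

lemma rotate_cycles_preserve_invariant:
  assumes "(rotate_cycle c n)\<^sup>*\<^sup>* A A'" "is_allocation n r A"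
    "\<forall>i<n. cost_le_share_or_envy_le_third c n T A i"
  shows "is_allocation n r A' \<and> (\<forall>i<n. cost_le_share_or_envy_le_third c n T A' i)"
  using assms
proof (induction rule: rtranclp_induct)
  case (step A' A'')
  obtain \<sigma> where \<sigma>: "\<sigma> permutes {..<n}" and A'': "A'' = A' \<circ> \<sigma>"
    and cost_le: "\<And>a. cost c a (A'' a) \<le> cost c a (A' a)"
    using rotate_cycle_permutes[OF step.hyps(2)] by blast
  have alloc: "is_allocation n r A'" and inv: "\<forall>i<n. cost_le_share_or_envy_le_third c n T A' i"
    using step.IH step.prems by blast+
  have "\<forall>i<n. cost_le_share_or_envy_le_third c n T (A' \<circ> \<sigma>) i"
    using cost_le_share_or_envy_le_third_comp_permutes[OF _ \<sigma>] inv cost_le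
    unfolding A'' comp_apply by blast
  then show ?case
    using is_allocation_comp_permutes[OF alloc \<sigma>] unfolding A'' by blast
qed simp

section \<open>The guarantee on identically ordered instances\<close>

definition chore_weight :: "nat \<Rightarrow> nat \<Rightarrow> (nat \<Rightarrow> nat set) \<Rightarrow> nat \<Rightarrow> real" where
  "chore_weight n r A j = of_bool (j = r) + (\<Sum>k<n. 2 * of_bool (j \<in> A k) / real (card (A k)))"

lemma chore_weight_nonneg: "0 \<le> chore_weight n r A j"
  unfolding chore_weight_def by (simp add: sum_nonneg)

lemma chore_weight_unallocated:
  assumes "is_allocation n r A" "r \<le> j"
  shows "chore_weight n r A j = of_bool (j = r)"
proof -
  have "j \<notin> A k" if "k < n" for k
    using is_allocation_bundle_subset[OF assms(1) that] \<open>r \<le> j\<close> by auto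
  then show ?thesis by (simp add: chore_weight_def)
qed

lemma chore_weight_in_bundle:
  assumes "is_allocation n r A" "k < n" "j \<in> A k"
  shows "chore_weight n r A j = 2 / real (card (A k))"
proof -
  have bundle_of_j: "j \<in> A k' \<longleftrightarrow> k' = k" if "k' \<in> {..<n}" for k'
    using assms disjoint_family_onD[of A "{..<n}" k k'] that by (auto simp: is_allocation_def)
  have "j \<noteq> r" using is_allocation_bundle_subset[OF assms(1,2)] assms(3) by auto
  then have "chore_weight n r A j = (\<Sum>k'<n. 2 * of_bool (j \<in> A k') / real (card (A k')))"
    by (simp add: chore_weight_def)
  also have "\<dots> = (\<Sum>k'<n. if k' = k then 2 / real (card (A k')) else 0)"
    using bundle_of_j by (intro sum.cong) auto
  also have "\<dots> = 2 / real (card (A k))"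
    using \<open>k < n\<close> by simp
  finally show ?thesis .
qed

lemma chore_weight_le_2:
  assumes "is_allocation n r A"
  shows "chore_weight n r A j \<le> 2"
proof (cases "r \<le> j")
  case True
  then show ?thesis using chore_weight_unallocated[OF assms] by simp
next
  case False
  then have "j \<in> (\<Union>k<n. A k)" using assms by (simp add: is_allocation_def)
  then obtain k where "k < n" "j \<in> A k" by blast
  moreover from this have "0 < card (A k)"
    using is_allocation_finite_bundle[OF assms] card_gt_0_iff by blast
  ultimately show ?thesis using chore_weight_in_bundle[OF assms] by (simp add: divide_le_eq)
qed

lemma chore_weight_gt_1_singleton:
  assumes "is_allocation n r A" "1 < chore_weight n r A j"
  shows "\<exists>k<n. A k = {j}"
proof -
  have "\<not> r \<le> j"
  proof
    assume "r \<le> j"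
    then have "chore_weight n r A j \<le> 1" using chore_weight_unallocated[OF assms(1)] by simp
    with assms(2) show False by simp
  qed
  then have "j \<in> (\<Union>k<n. A k)" using assms(1) by (simp add: is_allocation_def)
  then obtain k where k: "k < n" "j \<in> A k" by blast
  have "0 < card (A k)"
    using k is_allocation_finite_bundle[OF assms(1)] card_gt_0_iff by blast
  moreover from this have "card (A k) < 2"
    using chore_weight_in_bundle[OF assms(1) k] assms(2) by (simp add: less_divide_eq)
  ultimately have "card (A k) = 1" by linarith
  with k show ?thesis by (metis card_1_singletonE singletonD)
qed

lemma sum_chore_weight:
  assumes "is_allocation n r A" "\<forall>k<n. A k \<noteq> {}" "r < m"
  shows "(\<Sum>j<m. chore_weight n r A j) = 2 * real n + 1"
proof -
  have "(\<Sum>j<m. of_bool (j \<in> A k)) = real (card (A k))" if "k < n" for k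
  proof -
    have "A k \<subseteq> {..<m}" using is_allocation_bundle_subset[OF assms(1) that] \<open>r < m\<close> by auto
    then show ?thesis by (simp add: Int_absorb1 Int_absorb2 Collect_mem_eq)
  qed
  then have "(\<Sum>j<m. \<Sum>k<n. 2 * of_bool (j \<in> A k) / real (card (A k))) = (\<Sum>k<n. 2)"
    using assms(2) is_allocation_finite_bundle[OF assms(1)]
    by (subst sum.swap) (simp add: sum_divide_distrib[symmetric] sum_distrib_left[symmetric])
  then show ?thesis
    using \<open>r < m\<close> by (simp add: chore_weight_def sum.distrib)
qed

text \<open>The witness is the price vector chore_weight / (2n + 1): a bundle of price at least 1/n
  has weight more than 2.\<close>
lemma aps_chores_bundle_singleton_or_three:
  fixes ci :: "nat \<Rightarrow> real"
  assumes alloc: "is_allocation n r A" and nonempty: "\<forall>k<n. A k \<noteq> {}" and "r < m" "0 < n"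
  obtains S where "S \<subseteq> {..<m}" "(\<Sum>j\<in>S. ci j) \<le> aps_chores m ci (1 / real n)"
    "(\<exists>k<n. \<exists>j\<in>S. \<exists>j'\<in>S. A k = {j} \<and> j' \<noteq> j \<and> j' \<le> r) \<or> 3 \<le> card (S \<inter> {..r})"
proof -
  let ?v = "chore_weight n r A"
  have v_above: "?v j = 0" if "r < j" for j
    using chore_weight_unallocated[OF alloc] that by simp
  define p where "p j = ?v j / (2 * real n + 1)" for j
  have "is_price_vector m p"
    using chore_weight_nonneg sum_chore_weight[OF alloc nonempty \<open>r < m\<close>]
    by (simp add: is_price_vector_def p_def sum_divide_distrib[symmetric])
  then obtain S where S: "S \<subseteq> {..<m}" "1 / real n \<le> (\<Sum>j\<in>S. p j)"
      "(\<Sum>j\<in>S. ci j) \<le> aps_chores m ci (1 / real n)"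
    using bundle_cost_le_aps_chores[of m p "1 / real n"] \<open>0 < n\<close> by auto
  have "finite S" using S(1) finite_subset by blast
  have "(2 * real n + 1) / real n \<le> (\<Sum>j\<in>S. ?v j)"
    using S(2) \<open>0 < n\<close> by (simp add: p_def sum_divide_distrib[symmetric] field_simps)
  moreover have "2 < (2 * real n + 1) / real n" using \<open>0 < n\<close> by (simp add: field_simps)
  ultimately have v_S: "2 < (\<Sum>j\<in>S. ?v j)" by linarith
  have "(\<exists>k<n. \<exists>j\<in>S. \<exists>j'\<in>S. A k = {j} \<and> j' \<noteq> j \<and> j' \<le> r) \<or> 3 \<le> card (S \<inter> {..r})"
  proof (cases "\<exists>j\<in>S. 1 < ?v j")
    case True
    then obtain j k where j: "j \<in> S" "k < n" "A k = {j}"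
      using chore_weight_gt_1_singleton[OF alloc] by blast
    have "(\<Sum>j\<in>S. ?v j) = ?v j + (\<Sum>j'\<in>S - {j}. ?v j')" using \<open>finite S\<close> j(1) by (rule sum.remove)
    then have "0 < (\<Sum>j'\<in>S - {j}. ?v j')" using v_S chore_weight_le_2[OF alloc, of j] by linarith
    then obtain j' where "j' \<in> S" "j' \<noteq> j" "0 < ?v j'"
      by (metis DiffE insertCI not_less sum_nonpos)
    moreover from this have "j' \<le> r" using v_above by (metis less_irrefl not_le)
    ultimately show ?thesis using j by blast
  next
    case False
    have "(\<Sum>j\<in>S. ?v j) = (\<Sum>j\<in>S \<inter> {..r}. ?v j)"
      using \<open>finite S\<close> v_above by (intro sum.mono_neutral_right) (auto simp: not_le)
    also have "\<dots> \<le> real (card (S \<inter> {..r})) * 1"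
      using False by (intro sum_bounded_above) auto
    finally show ?thesis using v_S by simp
  qed
  with S that show ?thesis by blast
qed

lemma large_chore_within_aps_chores:
  assumes ido: "is_ido c n m" and nonneg: "\<forall>j<m. 0 \<le> c i j"
    and alloc: "is_allocation n r A" and "r < m" "i < n"
    and envy_free: "\<forall>k<n. cost c i (A i) \<le> cost c i (A k)"
    and large: "aps_chores m (c i) (1 / real n) < 3 * c i r"
  shows "cost c i (A i) + c i r \<le> aps_chores m (c i) (1 / real n)"
proof -
  let ?T = "aps_chores m (c i) (1 / real n)"
  have "0 < n" using \<open>i < n\<close> by simp
  have r_cheapest: "c i r \<le> c i j" if "j \<le> r" for j
    using ido \<open>i < n\<close> \<open>r < m\<close> that unfolding is_ido_def by (cases "j = r") auto
  show ?thesis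
  proof (cases "\<exists>k<n. A k = {}")
    case True
    then obtain k where "k < n" "A k = {}" by blast
    then have "cost c i (A i) \<le> 0" using envy_free by (metis cost_def sum.empty)
    moreover have "c i 0 \<le> ?T"
      using \<open>r < m\<close> \<open>0 < n\<close> nonneg by (intro chore_cost_le_aps_chores) auto
    ultimately show ?thesis using r_cheapest[of 0] by linarith
  next
    case False
    then have "\<forall>k<n. A k \<noteq> {}" by blast
    then obtain S where S: "S \<subseteq> {..<m}" "(\<Sum>j\<in>S. c i j) \<le> ?T"
      and pair_or_three: "(\<exists>k<n. \<exists>j\<in>S. \<exists>j'\<in>S. A k = {j} \<and> j' \<noteq> j \<and> j' \<le> r)
          \<or> 3 \<le> card (S \<inter> {..r})"
      using aps_chores_bundle_singleton_or_three[OF alloc _ \<open>r < m\<close> \<open>0 < n\<close>] by metis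
    have sub_le_T: "(\<Sum>j\<in>S'. c i j) \<le> ?T" if "S' \<subseteq> S" for S'
    proof -
      have "finite S" using S(1) finite_subset by blast
      then have "(\<Sum>j\<in>S'. c i j) \<le> (\<Sum>j\<in>S. c i j)"
        using that S(1) nonneg by (intro sum_mono2) auto
      with S(2) show ?thesis by linarith
    qed
    from pair_or_three show ?thesis
    proof
      assume "\<exists>k<n. \<exists>j\<in>S. \<exists>j'\<in>S. A k = {j} \<and> j' \<noteq> j \<and> j' \<le> r"
      then obtain k j j' where "k < n" "A k = {j}" "j \<in> S" "j' \<in> S" "j' \<noteq> j" "j' \<le> r" by blast
      then have "cost c i (A i) \<le> c i j" "c i r \<le> c i j'"
        using envy_free r_cheapest by (auto simp: cost_def)
      moreover have "c i j + c i j' \<le> ?T"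
        using sub_le_T[of "{j, j'}"] \<open>j \<in> S\<close> \<open>j' \<in> S\<close> \<open>j' \<noteq> j\<close> by simp
      ultimately show ?thesis by linarith
    next
      assume three: "3 \<le> card (S \<inter> {..r})"
      have "3 * c i r \<le> real (card (S \<inter> {..r})) * c i r"
        using three nonneg \<open>r < m\<close> by (intro mult_right_mono) auto
      also have "\<dots> \<le> (\<Sum>j\<in>S \<inter> {..r}. c i j)"
        using r_cheapest by (intro sum_bounded_below) auto
      also have "\<dots> \<le> ?T" by (rule sub_le_T) auto
      finally show ?thesis using large by linarith
    qed
  qed
qed

lemma cost_le_share_or_envy_le_third_give_chore:
  assumes ido: "is_ido c n m" and nonneg: "\<forall>i<n. \<forall>j<m. 0 \<le> c i j"
    and T: "T = (\<lambda>a. aps_chores m (c a) (1 / real n))"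
    and alloc: "is_allocation n r A" and "r < m" "i < n"
    and envy_free: "\<forall>k<n. \<not> envies c A i k"
    and inv: "\<forall>a<n. cost_le_share_or_envy_le_third c n T A a"
  shows "\<forall>a<n. cost_le_share_or_envy_le_third c n T (A(i := insert r (A i))) a"
proof (intro allI impI)
  fix a assume "a < n"
  let ?A = "A(i := insert r (A i))"
  have "r \<notin> A i" using is_allocation_bundle_subset[OF alloc \<open>i < n\<close>] by auto
  then have cost_i: "cost c b (?A i) = cost c b (A i) + c b r" for b
    using cost_insert is_allocation_finite_bundle[OF alloc \<open>i < n\<close>] by simp
  have grows: "cost c b (A k) \<le> cost c b (?A k)" if "b < n" for b k
    using cost_i nonneg that \<open>r < m\<close> by (cases "k = i") simp_all
  show "cost_le_share_or_envy_le_third c n T ?A a"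
  proof (cases "a = i")
    case False
    then have "?A a = A a" by simp
    with inv \<open>a < n\<close> grows[OF \<open>a < n\<close>] show ?thesis
      unfolding cost_le_share_or_envy_le_third_def by (smt (verit))
  next
    case True
    have envy_free': "\<forall>k<n. cost c i (A i) \<le> cost c i (A k)"
      using envy_free by (simp add: envies_def not_less)
    show ?thesis
    proof (cases "3 * c i r \<le> T i")
      case True
      have "cost c i (?A i) \<le> cost c i (?A k) + T i / 3" if "k < n" for k
        using envy_free' cost_i[of i] grows[OF \<open>i < n\<close>, of k] True that by fastforce
      then show ?thesis using \<open>a = i\<close> by (simp add: cost_le_share_or_envy_le_third_def)
    next
      case False
      then have "cost c i (A i) + c i r \<le> T i"
        using large_chore_within_aps_chores[OF ido _ alloc \<open>r < m\<close> \<open>i < n\<close> envy_free'] nonneg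
          \<open>i < n\<close> T by simp
      then show ?thesis using cost_i \<open>a = i\<close> by (simp add: cost_le_share_or_envy_le_third_def)
    qed
  qed
qed

lemma alg_chores_ido_invariant:
  assumes ido: "is_ido c n m" and nonneg: "\<forall>i<n. \<forall>j<m. 0 \<le> c i j" and "0 < m"
    and T: "T = (\<lambda>a. aps_chores m (c a) (1 / real n))"
    and "alg_chores_ido c n r A" "r \<le> m"
  shows "is_allocation n r A \<and> (\<forall>i<n. cost_le_share_or_envy_le_third c n T A i)"
  using assms(5,6)
proof (induction rule: alg_chores_ido.induct)
  case init
  have "0 \<le> T i" if "i < n" for i
    using aps_chores_nonneg \<open>0 < m\<close> nonneg that unfolding T by simp
  then show ?case
    by (simp add: is_allocation_def disjoint_family_on_def cost_le_share_or_envy_le_third_def cost_def)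
next
  case (step r A i A')
  then have "is_allocation n r A" "\<forall>i<n. cost_le_share_or_envy_le_third c n T A i" "r < m" by auto
  with step.hyps(2,3) have "is_allocation n (Suc r) (A(i := insert r (A i)))"
    "\<forall>a<n. cost_le_share_or_envy_le_third c n T (A(i := insert r (A i))) a"
    using is_allocation_insert cost_le_share_or_envy_le_third_give_chore[OF ido nonneg T] by blast+
  with step.hyps(4) show ?case
    using rotate_cycles_preserve_invariant by (auto simp: resolve_cycles_def)
qed

lemma cost_le_of_envy_le_third:
  assumes alloc: "is_allocation n m A" and "i < n"
    and inv: "cost_le_share_or_envy_le_third c n T A i"
    and total: "(\<Sum>j<m. c i j) \<le> real n * T i" and "0 \<le> T i"
  shows "cost c i (A i) \<le> (4 * real n - 1) / (3 * real n) * T i"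
proof -
  let ?V = "cost c i (A i)"
  have "0 < n" using \<open>i < n\<close> by simp
  from inv consider "?V \<le> T i" | "\<forall>k<n. ?V \<le> cost c i (A k) + T i / 3"
    unfolding cost_le_share_or_envy_le_third_def by blast
  then have "3 * real n * ?V \<le> (4 * real n - 1) * T i"
  proof cases
    case 1
    then have "3 * real n * ?V \<le> 3 * real n * T i" by (simp add: mult_left_mono)
    also have "\<dots> \<le> (4 * real n - 1) * T i"
      using \<open>0 < n\<close> \<open>0 \<le> T i\<close> by (intro mult_right_mono) auto
    finally show ?thesis .
  next
    case 2
    have "(\<Sum>k<n. ?V - T i / 3 + (if k = i then T i / 3 else 0)) \<le> (\<Sum>k<n. cost c i (A k))"
      using 2 by (intro sum_mono) auto
    also have "\<dots> \<le> real n * T i" using total sum_cost_bundles[OF alloc] by simp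
    finally have "real n * (?V - T i / 3) + T i / 3 \<le> real n * T i"
      using \<open>i < n\<close> by (simp add: sum.distrib)
    then show ?thesis by (simp add: algebra_simps)
  qed
  then show ?thesis using \<open>0 < n\<close> by (simp add: field_simps)
qed

lemma alg_chores_ido_cost_le:
  assumes ido: "is_ido c n m" and nonneg: "\<forall>i<n. \<forall>j<m. 0 \<le> c i j" and "0 < m"
    and "alg_chores_ido c n m A" "i < n"
  shows "cost c i (A i) \<le> (4 * real n - 1) / (3 * real n) * aps_chores m (c i) (1 / real n)"
proof -
  define T where "T = (\<lambda>a. aps_chores m (c a) (1 / real n))"
  have "0 < n" using \<open>i < n\<close> by simp
  have "is_allocation n m A" "cost_le_share_or_envy_le_third c n T A i"
    using alg_chores_ido_invariant[OF ido nonneg \<open>0 < m\<close> T_def] assms(4,5) by auto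
  moreover have "(\<Sum>j<m. c i j) \<le> real n * T i" "0 \<le> T i"
    using total_cost_le_aps_chores[of m "1 / real n" "c i"] aps_chores_nonneg[of m "1 / real n" "c i"]
      \<open>0 < m\<close> \<open>0 < n\<close> nonneg \<open>i < n\<close> unfolding T_def by (auto simp: field_simps)
  ultimately show ?thesis using cost_le_of_envy_le_third \<open>i < n\<close> unfolding T_def by blast
qed

section \<open>Reduction to identically ordered instances\<close>

lemma ido_of_permutation:
  obtains \<pi> where "bij_betw \<pi> {..<m} {..<m}" "\<forall>j<m. ido_of c m i j = c i (\<pi> j)"
proof -
  let ?xs = "map (c i) [0..<m]"
  have "mset (rev (sort ?xs)) = mset ?xs" by simp
  then obtain \<pi> where \<pi>: "bij_betw \<pi> {..<length (rev (sort ?xs))} {..<length ?xs}"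
      "\<forall>j<length (rev (sort ?xs)). rev (sort ?xs) ! j = ?xs ! \<pi> j"
    using permutation_Ex_bij by blast
  then have "bij_betw \<pi> {..<m} {..<m}" by simp
  moreover have "ido_of c m i j = c i (\<pi> j)" if "j < m" for j
  proof -
    have "\<pi> j < m" using bij_betwE[OF \<open>bij_betw \<pi> {..<m} {..<m}\<close>] that by blast
    with \<pi>(2) that show ?thesis by (simp add: ido_of_def)
  qed
  ultimately show ?thesis using that by blast
qed

lemma is_ido_ido_of: "is_ido (ido_of c m) n m"
  unfolding is_ido_def
proof (intro allI impI)
  fix i j k :: nat assume "j < k \<and> k < m"
  then have "sort (map (c i) [0..<m]) ! (m - Suc k) \<le> sort (map (c i) [0..<m]) ! (m - Suc j)"
    by (intro sorted_nth_mono) auto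
  with \<open>j < k \<and> k < m\<close> show "ido_of c m i k \<le> ido_of c m i j"
    unfolding ido_of_def by (simp add: rev_nth)
qed

lemma ido_of_nonneg:
  assumes "\<forall>j<m. 0 \<le> c i j" "j < m"
  shows "0 \<le> ido_of c m i j"
proof -
  obtain \<pi> where "bij_betw \<pi> {..<m} {..<m}" "\<forall>j<m. ido_of c m i j = c i (\<pi> j)"
    by (rule ido_of_permutation)
  with assms show ?thesis by (metis bij_betwE lessThan_iff)
qed

lemma aps_chores_reindex_le:
  assumes \<pi>: "bij_betw \<pi> {..<m} {..<m}" and ci': "\<forall>j<m. ci' j = ci (\<pi> j)"
    and "0 < m" "b \<le> 1"
  shows "aps_chores m ci' b \<le> aps_chores m ci b"
proof (rule aps_chores_le[OF \<open>0 < m\<close>])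
  define \<rho> where "\<rho> = inv_into {..<m} \<pi>"
  have \<rho>: "bij_betw \<rho> {..<m} {..<m}" unfolding \<rho>_def using \<pi> by (rule bij_betw_inv_into)
  fix p assume p: "is_price_vector m p"
  have "(\<Sum>j<m. p (\<rho> j)) = (\<Sum>j<m. p j)" using \<rho> by (rule sum.reindex_bij_betw)
  with p \<rho> have "is_price_vector m (\<lambda>j. p (\<rho> j))"
    by (auto simp: is_price_vector_def dest: bij_betwE)
  then obtain S where S: "S \<subseteq> {..<m}" "b \<le> (\<Sum>j\<in>S. p (\<rho> j))" "(\<Sum>j\<in>S. ci j) \<le> aps_chores m ci b"
    using bundle_cost_le_aps_chores \<open>b \<le> 1\<close> by blast
  have inj: "inj_on \<rho> S" using S(1) \<rho> by (meson bij_betw_def inj_on_subset)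
  have "\<rho> ` S \<subseteq> {..<m}" using S(1) \<rho> by (auto dest: bij_betwE)
  moreover have "(\<Sum>j\<in>\<rho> ` S. p j) = (\<Sum>j\<in>S. p (\<rho> j))"
    using inj by (simp add: sum.reindex)
  moreover have "(\<Sum>j\<in>\<rho> ` S. ci' j) = (\<Sum>j\<in>S. ci j)"
  proof -
    have "(\<Sum>j\<in>\<rho> ` S. ci' j) = (\<Sum>j\<in>S. ci' (\<rho> j))"
      using inj by (simp add: sum.reindex)
    also have "\<dots> = (\<Sum>j\<in>S. ci j)"
    proof (rule sum.cong[OF refl])
      fix j assume "j \<in> S"
      then have "j < m" "\<rho> j < m" using S(1) \<rho> by (auto dest: bij_betwE)
      then show "ci' (\<rho> j) = ci j"
        using ci' \<pi> unfolding \<rho>_def by (simp add: bij_betw_inv_into_right)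
    qed
    finally show ?thesis .
  qed
  ultimately show "\<exists>S\<subseteq>{..<m}. b \<le> (\<Sum>j\<in>S. p j) \<and> (\<Sum>j\<in>S. ci' j) \<le> aps_chores m ci b"
    using S by metis
qed

lemma aps_chores_ido_of_le:
  "0 < m \<Longrightarrow> b \<le> 1 \<Longrightarrow> aps_chores m (ido_of c m i) b \<le> aps_chores m (c i) b"
  by (metis ido_of_permutation aps_chores_reindex_le)

lemma exists_chore_cost_le_ido_of:
  assumes "R \<subseteq> {..<m}" "j < card R"
  shows "\<exists>e\<in>R. c i e \<le> ido_of c m i j"
proof -
  obtain \<pi> where \<pi>: "bij_betw \<pi> {..<m} {..<m}" "\<forall>j<m. ido_of c m i j = c i (\<pi> j)"
    by (rule ido_of_permutation)
  have "card (\<pi> ` {..<j}) < card R"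
    using assms(2) card_image_le[of "{..<j}" \<pi>] by simp
  then obtain e where "e \<in> R" "e \<notin> \<pi> ` {..<j}"
    by (metis card_mono finite_imageI finite_lessThan not_le subsetI)
  moreover have "e < m" using \<open>e \<in> R\<close> assms(1) by auto
  then obtain q where "q < m" "e = \<pi> q"
    using \<pi>(1) by (metis bij_betw_imp_surj_on imageE lessThan_iff)
  ultimately have "j \<le> q" "q < m" by auto
  then have "ido_of c m i q \<le> ido_of c m i j"
    using is_ido_ido_of[of c m "Suc i"] unfolding is_ido_def by (cases "j = q") auto
  with \<pi>(2) \<open>q < m\<close> \<open>e = \<pi> q\<close> \<open>e \<in> R\<close> show ?thesis by auto
qed

lemma reduction_pick_invariant:
  assumes "reduction_pick c n m A k R B" and nonneg: "\<forall>i<n. \<forall>j<m. 0 \<le> c i j"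
  shows "R \<subseteq> {..<m} \<and> card R = m - k \<and>
    (\<forall>a<n. cost c a (B a) \<le> (\<Sum>j\<in>A a \<inter> {m - k..<m}. ido_of c m a j))"
  using assms(1)
proof (induction rule: reduction_pick.induct)
  case init
  then show ?case by (simp add: cost_def)
next
  case (step k R B i e)
  then have R: "R \<subseteq> {..<m}" "card R = m - k"
    and IH: "\<forall>a<n. cost c a (B a) \<le> (\<Sum>j\<in>A a \<inter> {m - k..<m}. ido_of c m a j)" by auto
  have "finite R" using R(1) finite_subset by blast
  have "e < m" using step.hyps(5) R(1) by auto
  let ?B = "B(i := insert e (B i))"
  have "cost c a (?B a) \<le> (\<Sum>j\<in>A a \<inter> {m - Suc k..<m}. ido_of c m a j)" if "a < n" for a
  proof (cases "a = i")
    case True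
    have "A i \<inter> {m - Suc k..<m} = insert (m - 1 - k) (A i \<inter> {m - k..<m})"
      using step.hyps(2,4) by auto
    moreover have "m - 1 - k \<notin> A i \<inter> {m - k..<m}" "finite (A i \<inter> {m - k..<m})"
      using step.hyps(2) by auto
    ultimately have sum_eq: "(\<Sum>j\<in>A i \<inter> {m - Suc k..<m}. ido_of c m i j)
        = ido_of c m i (m - 1 - k) + (\<Sum>j\<in>A i \<inter> {m - k..<m}. ido_of c m i j)"
      by simp
    have "m - 1 - k < card R" using R(2) step.hyps(2) by simp
    then obtain e' where "e' \<in> R" "c i e' \<le> ido_of c m i (m - 1 - k)"
      using exists_chore_cost_le_ido_of[OF R(1)] by blast
    then have "c i e \<le> ido_of c m i (m - 1 - k)" using step.hyps(6) by force
    moreover have "cost c i (?B i) \<le> cost c i (B i) + c i e"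
      using cost_insert_le nonneg step.hyps(3) \<open>e < m\<close> by simp
    ultimately show ?thesis using True IH step.hyps(3) sum_eq by fastforce
  next
    case False
    have "(\<Sum>j\<in>A a \<inter> {m - k..<m}. ido_of c m a j) \<le> (\<Sum>j\<in>A a \<inter> {m - Suc k..<m}. ido_of c m a j)"
      using nonneg that by (intro sum_mono2) (auto intro: ido_of_nonneg)
    then show ?thesis using False IH that by fastforce
  qed
  moreover have "card (R - {e}) = m - Suc k" using R(2) step.hyps(5) \<open>finite R\<close> by simp
  ultimately show ?case using R(1) by auto
qed

lemma reduction_pick_cost_le:
  assumes "reduction_pick c n m A m {} B" "\<forall>i<n. \<forall>j<m. 0 \<le> c i j"
    and "A i \<subseteq> {..<m}" "i < n"
  shows "cost c i (B i) \<le> cost (ido_of c m) i (A i)"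
proof -
  have "cost c i (B i) \<le> (\<Sum>j\<in>A i \<inter> {m - m..<m}. ido_of c m i j)"
    using reduction_pick_invariant[OF assms(1,2)] \<open>i < n\<close> by blast
  moreover have "A i \<inter> {m - m..<m} = A i" using assms(3) by auto
  ultimately show ?thesis by (simp add: cost_def)
qed

theorem theorem4:
  fixes c :: "nat \<Rightarrow> nat \<Rightarrow> real" and n m :: nat
  assumes "1 \<le> n" and "1 \<le> m"
    and nonneg: "\<forall>i<n. \<forall>j<m. 0 \<le> c i j"
  shows "(is_ido c n m \<longrightarrow>
            (\<forall>A. alg_chores_ido c n m A \<longrightarrow>
               (\<forall>i<n. cost c i (A i) \<le> (4 * real n - 1) / (3 * real n) * aps_chores m (c i) (1 / real n))))
       \<and> (\<forall>A B. alg_chores_ido (ido_of c m) n m A \<and> reduction_pick c n m A m {} B \<longrightarrow>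
               (\<forall>i<n. cost c i (B i) \<le> (4 * real n - 1) / (3 * real n) * aps_chores m (c i) (1 / real n)))"
proof -
  have "0 < m" using \<open>1 \<le> m\<close> by simp
  have nonneg_ido: "\<forall>i<n. \<forall>j<m. 0 \<le> ido_of c m i j"
    using nonneg ido_of_nonneg by blast
  show ?thesis
  proof (intro conjI impI allI)
    fix A i assume "is_ido c n m" "alg_chores_ido c n m A" "i < n"
    then show "cost c i (A i) \<le> (4 * real n - 1) / (3 * real n) * aps_chores m (c i) (1 / real n)"
      using alg_chores_ido_cost_le nonneg \<open>0 < m\<close> by blast
  next
    fix A B i assume AB: "alg_chores_ido (ido_of c m) n m A \<and> reduction_pick c n m A m {} B"
      and "i < n"
    have "A i \<subseteq> {..<m}"
      using alg_chores_ido_invariant[OF is_ido_ido_of nonneg_ido \<open>0 < m\<close> refl] AB \<open>i < n\<close>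
        is_allocation_bundle_subset by blast
    then have "cost c i (B i) \<le> cost (ido_of c m) i (A i)"
      using reduction_pick_cost_le AB nonneg \<open>i < n\<close> by blast
    also have "\<dots> \<le> (4 * real n - 1) / (3 * real n) * aps_chores m (ido_of c m i) (1 / real n)"
      using alg_chores_ido_cost_le[OF is_ido_ido_of nonneg_ido \<open>0 < m\<close>] AB \<open>i < n\<close> by blast
    also have "\<dots> \<le> (4 * real n - 1) / (3 * real n) * aps_chores m (c i) (1 / real n)"
      using aps_chores_ido_of_le[OF \<open>0 < m\<close>] \<open>1 \<le> n\<close> by (intro mult_left_mono) auto
    finally show "cost c i (B i) \<le> (4 * real n - 1) / (3 * real n) * aps_chores m (c i) (1 / real n)" .
  qed
qed

end
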